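(* Let $(\mu^{(n)})$ be an almost-Berger sequence. Then $\sec(\mu^{(n)})(e_0\wedge e_1)\to0$, $\sec(\mu^{(n)})(e_1\wedge e_2)\to4$ and $\sec(\mu^{(n)})(e_0\wedge e_2)\to0$ as $n\to+\infty$ if and only if $\mathrm{reg}(\mu^{(n)})\ge2$.
   Context: Let $X_0=\begin{pmatrix}i&0\\0&-i\end{pmatrix}$, $X_1=\begin{pmatrix}0&-1\\1&0\end{pmatrix}$, $X_2=\begin{pmatrix}0&i\\i&0\end{pmatrix}$, a basis of $\mathfrak{su}(2)$ with $[X_0,X_1]=-2X_2$, $[X_0,X_2]=2X_1$, $[X_1,X_2]=-2X_0$. For $\varepsilon,\lambda_1,\lambda_2>0$ let $g$ be the left-invariant metric on $\mathsf{SU}(2)$ with $X_0,X_1,X_2$ pairwise orthogonal and $g(X_0,X_0)=\varepsilon$, $g(X_1,X_1)=\lambda_1$, $g(X_2,X_2)=\lambda_2$; identify the orthonormal basis $X_0/\sqrt\varepsilon,X_1/\sqrt{\lambda_1},X_2/\sqrt{\lambda_2}$ with the standard basis $(e_0,e_1,e_2)$ of $\mathbb R^3$, and let $\mu$ be the corresponding bracket on $\mathbb R^3$; $\sec(\mu)(e_i\wedge e_j)$ denotes the sectional curvature of $g$ on the plane spanned by $e_i,e_j$. An almost-Berger sequence is a sequence $(\mu^{(n)})$ of such brackets, with parameters $(\varepsilon^{(n)},\lambda_1^{(n)},\lambda_2^{(n)})$, such that $\varepsilon^{(n)}\to0$, $\lambda_i^{(n)}\to1$ ($i=1,2$), and there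 is $C>0$ with $|\lambda_1^{(n)}-\lambda_2^{(n)}|\le C\varepsilon^{(n)}$ for all $n$ (equivalently, the sectional curvatures are uniformly bounded). Its regularity index is $\mathrm{reg}(\mu^{(n)})=\sup\{k\in\mathbb Z:(\varepsilon^{(n)})^{-k/2}|\lambda_1^{(n)}-\lambda_2^{(n)}|\to0\text{ as }n\to\infty\}\in\{1,2,\dots\}\cup\{+\infty\}$. *)

theory Defs
  imports Complex_Main "HOL-Library.Extended_Real"
begin

(* Vectors of R^3 are represented as functions nat => real, only the
   components 0,1,2 being relevant; e i is the standard basis vector. *)

definition std_e :: "nat \<Rightarrow> nat \<Rightarrow> real" where
  "std_e i = (\<lambda>k. if k = i then 1 else 0)"

definition inner3 :: "(nat \<Rightarrow> real) \<Rightarrow> (nat \<Rightarrow> real) \<Rightarrow> real" where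
  "inner3 x y = (\<Sum>k<3. x k * y k)"

(* structure constants of su(2) in the basis X0,X1,X2:
   [X_i,X_j] = sum_k cX i j k X_k, with [X0,X1] = -2X2, [X0,X2] = 2X1, [X1,X2] = -2X0 *)
definition cX :: "nat \<Rightarrow> nat \<Rightarrow> nat \<Rightarrow> real" where
  "cX i j k =
    (if (i,j,k) = (0,1,2) then -2 else if (i,j,k) = (1,0,2) then 2
     else if (i,j,k) = (0,2,1) then 2 else if (i,j,k) = (2,0,1) then -2
     else if (i,j,k) = (1,2,0) then -2 else if (i,j,k) = (2,1,0) then 2
     else 0)"

definition scal :: "real \<Rightarrow> real \<Rightarrow> real \<Rightarrow> nat \<Rightarrow> real" where
  "scal \<epsilon> l1 l2 i = (if i = 0 then sqrt \<epsilon> else if i = 1 then sqrt l1 else sqrt l2)"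

(* structure constants of the bracket mu in the orthonormal basis
   e_i = X_i / sqrt(g(X_i,X_i)):  mu(e_i,e_j) = sum_k (mu_const ... i j k) e_k *)
definition mu_const :: "real \<Rightarrow> real \<Rightarrow> real \<Rightarrow> nat \<Rightarrow> nat \<Rightarrow> nat \<Rightarrow> real" where
  "mu_const \<epsilon> l1 l2 i j k =
     cX i j k * scal \<epsilon> l1 l2 k / (scal \<epsilon> l1 l2 i * scal \<epsilon> l1 l2 j)"

definition brk :: "(nat \<Rightarrow> nat \<Rightarrow> nat \<Rightarrow> real) \<Rightarrow> (nat \<Rightarrow> real) \<Rightarrow> (nat \<Rightarrow> real) \<Rightarrow> nat \<Rightarrow> real" where
  "brk c x y = (\<lambda>k. \<Sum>i<3. \<Sum>j<3. x i * y j * c i j k)"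

(* Levi-Civita connection of the left-invariant metric (Koszul formula, e_i orthonormal):
   <nabla_x y, z> = 1/2 (<[x,y],z> - <[y,z],x> + <[z,x],y>) *)
definition nabla :: "(nat \<Rightarrow> nat \<Rightarrow> nat \<Rightarrow> real) \<Rightarrow> (nat \<Rightarrow> real) \<Rightarrow> (nat \<Rightarrow> real) \<Rightarrow> nat \<Rightarrow> real" where
  "nabla c x y = (\<lambda>k. (inner3 (brk c x y) (std_e k) - inner3 (brk c y (std_e k)) x
                        + inner3 (brk c (std_e k) x) y) / 2)"

definition curv :: "(nat \<Rightarrow> nat \<Rightarrow> nat \<Rightarrow> real) \<Rightarrow> (nat \<Rightarrow> real) \<Rightarrow> (nat \<Rightarrow> real) \<Rightarrow> (nat \<Rightarrow> real) \<Rightarrow> nat \<Rightarrow> real" where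
  "curv c x y z = (\<lambda>k. nabla c x (nabla c y z) k - nabla c y (nabla c x z) k
                      - nabla c (brk c x y) z k)"

(* sectional curvature of the plane e_i \<and> e_j (orthonormal): <R(e_i,e_j)e_j, e_i> *)
definition sec_plane :: "(nat \<Rightarrow> nat \<Rightarrow> nat \<Rightarrow> real) \<Rightarrow> nat \<Rightarrow> nat \<Rightarrow> real" where
  "sec_plane c i j = inner3 (curv c (std_e i) (std_e j) (std_e j)) (std_e i)"

definition almost_Berger :: "(nat \<Rightarrow> real) \<Rightarrow> (nat \<Rightarrow> real) \<Rightarrow> (nat \<Rightarrow> real) \<Rightarrow> bool" where
  "almost_Berger \<epsilon> l1 l2 \<longleftrightarrow>
     (\<forall>n. \<epsilon> n > 0 \<and> l1 n > 0 \<and> l2 n > 0) \<and>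
     \<epsilon> \<longlonglongrightarrow> 0 \<and> l1 \<longlonglongrightarrow> 1 \<and> l2 \<longlonglongrightarrow> 1 \<and>
     (\<exists>C>0. \<forall>n. \<bar>l1 n - l2 n\<bar> \<le> C * \<epsilon> n)"

definition reg_index :: "(nat \<Rightarrow> real) \<Rightarrow> (nat \<Rightarrow> real) \<Rightarrow> (nat \<Rightarrow> real) \<Rightarrow> ereal" where
  "reg_index \<epsilon> l1 l2 =
     Sup {ereal (real_of_int k) | k.
            (\<lambda>n. \<epsilon> n powr (- real_of_int k / 2) * \<bar>l1 n - l2 n\<bar>) \<longlonglongrightarrow> 0}"

end

theory Submission
  imports Defs
begin

text \<open>
  Milnor's formulas express the sectional curvatures as rational functions of
  \<open>\<epsilon>, \<lambda>\<^sub>1, \<lambda>\<^sub>2\<close>. In terms of the ratio \<open>r = (\<lambda>\<^sub>1 - \<lambda>\<^sub>2)/\<epsilon>\<close>, which the almost-Berger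
  condition keeps bounded, they read \<open>sec(e\<^sub>1\<and>e\<^sub>2) = 4 + o(1)\<close>, \<open>sec(e\<^sub>0\<and>e\<^sub>1) = 4r + o(1)\<close> and
  \<open>sec(e\<^sub>0\<and>e\<^sub>2) = -4r + o(1)\<close>. So the three limits hold iff \<open>r \<longlonglongrightarrow> 0\<close>, which is exactly the
  statement that the regularity index is at least \<open>2\<close>.
\<close>

lemma sum_lessThan_3: "(\<Sum>k<(3::nat). f k) = f 0 + f 1 + (f 2 :: 'a::comm_monoid_add)"
  by (simp add: numeral_3_eq_3 numeral_2_eq_2)

lemma exists_positive_square_roots:
  assumes "e > 0" "p > 0" "q > 0"
  obtains a b c :: real where "a > 0" "b > 0" "c > 0" "e = a\<^sup>2" "p = b\<^sup>2" "q = c\<^sup>2"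
  using assms by (metis real_sqrt_gt_0_iff real_sqrt_pow2 less_imp_le)

lemmas sec_plane_unfold =
  sec_plane_def curv_def nabla_def brk_def inner3_def sum_lessThan_3 std_e_def
  mu_const_def cX_def scal_def

text \<open>The scale factors are square roots, so the computation is done for squares.\<close>

lemma sec_plane_01:
  assumes "e > 0" "p > 0" "q > 0"
  shows "sec_plane (mu_const e p q) 0 1 = (e - 2*(p - q) + (p - q)/e * (p + 3*q)) / (p*q)"
proof -
  obtain a b c where "a > 0" "b > 0" "c > 0" and eq: "e = a\<^sup>2" "p = b\<^sup>2" "q = c\<^sup>2"
    using exists_positive_square_roots assms .
  then show ?thesis
    unfolding eq by (simp add: sec_plane_unfold field_simps power2_eq_square)
qed

lemma sec_plane_12:
  assumes "e > 0" "p > 0" "q > 0"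
  shows "sec_plane (mu_const e p q) 1 2 = ((p - q)/e * (p - q) - 3*e + 2*(p + q)) / (p*q)"
proof -
  obtain a b c where "a > 0" "b > 0" "c > 0" and eq: "e = a\<^sup>2" "p = b\<^sup>2" "q = c\<^sup>2"
    using exists_positive_square_roots assms .
  then show ?thesis
    unfolding eq by (simp add: sec_plane_unfold field_simps power2_eq_square)
qed

lemma sec_plane_02:
  assumes "e > 0" "p > 0" "q > 0"
  shows "sec_plane (mu_const e p q) 0 2 = (e + 2*(p - q) - (p - q)/e * (3*p + q)) / (p*q)"
proof -
  obtain a b c where "a > 0" "b > 0" "c > 0" and eq: "e = a\<^sup>2" "p = b\<^sup>2" "q = c\<^sup>2"
    using exists_positive_square_roots assms .
  then show ?thesis
    unfolding eq by (simp add: sec_plane_unfold field_simps power2_eq_square)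
qed

lemma tendsto_powr_weight_mono:
  fixes \<epsilon> d :: "nat \<Rightarrow> real"
  assumes pos: "\<And>n. \<epsilon> n > 0" and "\<epsilon> \<longlonglongrightarrow> 0" and "j \<le> k"
    and lim: "(\<lambda>n. \<epsilon> n powr (- real_of_int k / 2) * \<bar>d n\<bar>) \<longlonglongrightarrow> 0"
  shows "(\<lambda>n. \<epsilon> n powr (- real_of_int j / 2) * \<bar>d n\<bar>) \<longlonglongrightarrow> 0"
proof (rule tendsto_0_le[OF lim, where K = 1])
  have "eventually (\<lambda>n. \<epsilon> n < 1) sequentially"
    using order_tendstoD(2)[OF \<open>\<epsilon> \<longlonglongrightarrow> 0\<close>] by simp
  then show "eventually (\<lambda>n. norm (\<epsilon> n powr (- real_of_int j / 2) * \<bar>d n\<bar>)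
      \<le> norm (\<epsilon> n powr (- real_of_int k / 2) * \<bar>d n\<bar>) * 1) sequentially"
  proof eventually_elim
    case (elim n)
    then have "\<epsilon> n powr (- real_of_int j / 2) \<le> \<epsilon> n powr (- real_of_int k / 2)"
      using pos[of n] \<open>j \<le> k\<close> by (intro powr_mono') auto
    then show ?case
      by (simp add: mult_right_mono)
  qed
qed

lemma reg_index_ge_iff:
  assumes "\<And>n. \<epsilon> n > 0" and "\<epsilon> \<longlonglongrightarrow> 0"
  shows "reg_index \<epsilon> l1 l2 \<ge> ereal (real_of_int j) \<longleftrightarrow>
    (\<lambda>n. \<epsilon> n powr (- real_of_int j / 2) * \<bar>l1 n - l2 n\<bar>) \<longlonglongrightarrow> 0"
    (is "_ \<longleftrightarrow> ?tends j")
proof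
  assume "?tends j"
  then show "reg_index \<epsilon> l1 l2 \<ge> ereal (real_of_int j)"
    unfolding reg_index_def by (intro Sup_upper) blast
next
  assume ge: "reg_index \<epsilon> l1 l2 \<ge> ereal (real_of_int j)"
  show "?tends j"
  proof (rule ccontr)
    assume "\<not> ?tends j"
    then have "real_of_int k \<le> real_of_int j - 1" if "?tends k" for k
    proof -
      have "k < j"
        using tendsto_powr_weight_mono[OF assms, of j k "\<lambda>n. l1 n - l2 n"] that \<open>\<not> ?tends j\<close>
        by force
      then show ?thesis by linarith
    qed
    then have "reg_index \<epsilon> l1 l2 \<le> ereal (real_of_int (j - 1))"
      unfolding reg_index_def by (intro Sup_least) auto
    from order_trans[OF ge this] show False by simp
  qed
qed

lemma reg_index_ge_2_iff:
  assumes pos: "\<And>n. \<epsilon> n > 0" and "\<epsilon> \<longlonglongrightarrow> 0"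
  shows "reg_index \<epsilon> l1 l2 \<ge> 2 \<longleftrightarrow> (\<lambda>n. (l1 n - l2 n) / \<epsilon> n) \<longlonglongrightarrow> 0"
proof -
  have "(\<lambda>n. \<epsilon> n powr (- real_of_int 2 / 2) * \<bar>l1 n - l2 n\<bar>) = (\<lambda>n. \<bar>(l1 n - l2 n) / \<epsilon> n\<bar>)"
    using pos by (auto simp: powr_neg_one abs_divide)
  with reg_index_ge_iff[OF assms, of 2 l1 l2] show ?thesis
    by (simp only: tendsto_rabs_zero_iff) simp
qed

context
  fixes \<epsilon> l1 l2 :: "nat \<Rightarrow> real"
  assumes almost_Berger: "almost_Berger \<epsilon> l1 l2"
begin

private lemma pos: "\<epsilon> n > 0" "l1 n > 0" "l2 n > 0"
  and lim: "\<epsilon> \<longlonglongrightarrow> 0" "l1 \<longlonglongrightarrow> 1" "l2 \<longlonglongrightarrow> 1"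
  using almost_Berger unfolding almost_Berger_def by auto

private lemma diff_tendsto_0: "(\<lambda>n. l1 n - l2 n) \<longlonglongrightarrow> 0"
  using tendsto_diff[OF lim(2,3)] by simp

private lemma sec_plane_along:
  "sec_plane (mu_const (\<epsilon> n) (l1 n) (l2 n)) 0 1 =
    (\<epsilon> n - 2 * (l1 n - l2 n) + (l1 n - l2 n) / \<epsilon> n * (l1 n + 3 * l2 n)) / (l1 n * l2 n)"
  "sec_plane (mu_const (\<epsilon> n) (l1 n) (l2 n)) 1 2 =
    ((l1 n - l2 n) / \<epsilon> n * (l1 n - l2 n) - 3 * \<epsilon> n + 2 * (l1 n + l2 n)) / (l1 n * l2 n)"
  "sec_plane (mu_const (\<epsilon> n) (l1 n) (l2 n)) 0 2 =
    (\<epsilon> n + 2 * (l1 n - l2 n) - (l1 n - l2 n) / \<epsilon> n * (3 * l1 n + l2 n)) / (l1 n * l2 n)"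
  by (fact sec_plane_01[OF pos(1-3)] sec_plane_12[OF pos(1-3)] sec_plane_02[OF pos(1-3)])+

lemma almost_Berger_Bseq_ratio: "Bseq (\<lambda>n. (l1 n - l2 n) / \<epsilon> n)"
proof -
  obtain C where "\<And>n. \<bar>l1 n - l2 n\<bar> \<le> C * \<epsilon> n"
    using almost_Berger unfolding almost_Berger_def by blast
  then have "norm ((l1 n - l2 n) / \<epsilon> n) \<le> C" for n
    using pos(1)[of n] by (simp add: abs_divide divide_le_eq)
  then show ?thesis by (rule BseqI')
qed

lemma almost_Berger_sec_plane_12:
  "(\<lambda>n. sec_plane (mu_const (\<epsilon> n) (l1 n) (l2 n)) 1 2) \<longlonglongrightarrow> 4"
proof -
  have "(\<lambda>n. (l1 n - l2 n) / \<epsilon> n * (l1 n - l2 n)) \<longlonglongrightarrow> 0"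
    using bounded_bilinear.Bfun_prod_Zfun[OF bounded_bilinear_mult almost_Berger_Bseq_ratio]
      diff_tendsto_0
    by (simp add: tendsto_Zfun_iff)
  then have "(\<lambda>n. ((l1 n - l2 n) / \<epsilon> n * (l1 n - l2 n) - 3 * \<epsilon> n + 2 * (l1 n + l2 n))
      / (l1 n * l2 n)) \<longlonglongrightarrow> (0 - 3 * 0 + 2 * (1 + 1)) / (1 * 1)"
    by (intro tendsto_intros lim) auto
  then show ?thesis
    unfolding sec_plane_along by simp
qed

lemma almost_Berger_sec_plane_01_tendsto_0_iff:
  "(\<lambda>n. sec_plane (mu_const (\<epsilon> n) (l1 n) (l2 n)) 0 1) \<longlonglongrightarrow> 0 \<longleftrightarrow>
    (\<lambda>n. (l1 n - l2 n) / \<epsilon> n) \<longlonglongrightarrow> 0"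
  (is "?sec \<longlonglongrightarrow> 0 \<longleftrightarrow> ?r \<longlonglongrightarrow> 0")
proof
  assume "?sec \<longlonglongrightarrow> 0"
  then have "(\<lambda>n. (?sec n * (l1 n * l2 n) - \<epsilon> n + 2 * (l1 n - l2 n)) / (l1 n + 3 * l2 n))
      \<longlonglongrightarrow> (0 * (1 * 1) - 0 + 2 * 0) / (1 + 3 * 1)"
    by (intro tendsto_intros lim diff_tendsto_0) auto
  moreover have "?r n = (?sec n * (l1 n * l2 n) - \<epsilon> n + 2 * (l1 n - l2 n)) / (l1 n + 3 * l2 n)" for n
  proof -
    have "?sec n * (l1 n * l2 n) - \<epsilon> n + 2 * (l1 n - l2 n) = ?r n * (l1 n + 3 * l2 n)"
      using pos[of n] unfolding sec_plane_along by simp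
    moreover have "l1 n + 3 * l2 n \<noteq> 0"
      using pos[of n] by simp
    ultimately show ?thesis
      by simp
  qed
  ultimately show "?r \<longlonglongrightarrow> 0" by simp
next
  assume "?r \<longlonglongrightarrow> 0"
  then have "(\<lambda>n. (\<epsilon> n - 2 * (l1 n - l2 n) + ?r n * (l1 n + 3 * l2 n)) / (l1 n * l2 n))
      \<longlonglongrightarrow> (0 - 2 * 0 + 0 * (1 + 3 * 1)) / (1 * 1)"
    by (intro tendsto_intros lim diff_tendsto_0) auto
  then show "?sec \<longlonglongrightarrow> 0"
    unfolding sec_plane_along by simp
qed

lemma almost_Berger_sec_plane_02:
  assumes "(\<lambda>n. (l1 n - l2 n) / \<epsilon> n) \<longlonglongrightarrow> 0"
  shows "(\<lambda>n. sec_plane (mu_const (\<epsilon> n) (l1 n) (l2 n)) 0 2) \<longlonglongrightarrow> 0"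
proof -
  have "(\<lambda>n. (\<epsilon> n + 2 * (l1 n - l2 n) - (l1 n - l2 n) / \<epsilon> n * (3 * l1 n + l2 n)) / (l1 n * l2 n))
      \<longlonglongrightarrow> (0 + 2 * 0 - 0 * (3 * 1 + 1)) / (1 * 1)"
    by (intro tendsto_intros assms lim diff_tendsto_0) auto
  then show ?thesis
    unfolding sec_plane_along by simp
qed

end

theorem proposition4p3:
  fixes \<epsilon> l1 l2 :: "nat \<Rightarrow> real"
  assumes "almost_Berger \<epsilon> l1 l2"
  shows "((\<lambda>n. sec_plane (mu_const (\<epsilon> n) (l1 n) (l2 n)) 0 1) \<longlonglongrightarrow> 0 \<and>
          (\<lambda>n. sec_plane (mu_const (\<epsilon> n) (l1 n) (l2 n)) 1 2) \<longlonglongrightarrow> 4 \<and>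
          (\<lambda>n. sec_plane (mu_const (\<epsilon> n) (l1 n) (l2 n)) 0 2) \<longlonglongrightarrow> 0)
         \<longleftrightarrow> reg_index \<epsilon> l1 l2 \<ge> 2"
proof -
  have "\<And>n. \<epsilon> n > 0" and "\<epsilon> \<longlonglongrightarrow> 0"
    using assms unfolding almost_Berger_def by auto
  then have reg: "reg_index \<epsilon> l1 l2 \<ge> 2 \<longleftrightarrow> (\<lambda>n. (l1 n - l2 n) / \<epsilon> n) \<longlonglongrightarrow> 0"
    by (rule reg_index_ge_2_iff)
  show ?thesis
    unfolding reg almost_Berger_sec_plane_01_tendsto_0_iff[OF assms]
    using almost_Berger_sec_plane_12[OF assms] almost_Berger_sec_plane_02[OF assms]
    by auto
qed

end
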